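(* In the curved-exam game described in the context, let $x^*=(x_1^*,\dots,x_n^* )$ be a pure Nash equilibrium in which there is a curve ($\bar x^*:=\frac1n\sum_j x_j^*<m$) and every student exerts positive effort ($x_i^*>0$ for all $i$). Define $$\hat\alpha_n:=n\Big(1-\Big(\sum_{i=1}^n\frac{1}{n-\alpha_i}\Big)^{-1}\Big)=n-\mathrm{HarmonicMean}(n-\alpha_1,\dots,n-\alpha_n).$$ Then $\min_i\alpha_i\le\hat\alpha_n\le\max_i\alpha_i$, $$\bar x^*=1-\frac{nm}{n-1}\Big(\frac1{\hat\alpha_n}-1\Big),\qquad\text{and}\qquad x_i^*=\frac{(n-1)\alpha_i-n(1-\alpha_i)(m-\bar x^* )}{n-\alpha_i}\ \text{ for each } i.$$
   Context: The curved-exam game: fix $n\ge2$, abilities $\alpha_1,\dots,\alpha_n\in(0,1)$, target mean $m\in(0,1)$. Student $i$ chooses $x_i\in[0,1]$; $\bar x=\frac1n\sum_j x_j$, $\bar x_{-i}=\frac1{n-1}\sum_{j\ne i}x_j$. Grade $G_i(x)=x_i+\max(m-\bar x,0)=\max\big(m+\frac{n-1}{n}(x_i-\bar x_{-i}),x_i\big)$ (not truncated at 1); payoff $U_i(x)=G_i(x)^{\alpha_i}(1-x_i)^{1-\alpha_i}$. A pure Nash equilibrium is a profile where each $x_i$ maximizes $U_i(\cdot,x_{-i})$ over $[0,1]$. *)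

theory Defs
  imports Complex_Main
begin

text \<open>Students are indexed by 0,...,n-1; a profile is a function nat => real
  of which only the values at i < n matter.\<close>

definition xbar :: "nat \<Rightarrow> (nat \<Rightarrow> real) \<Rightarrow> real" where
  "xbar n x = (\<Sum>j<n. x j) / real n"

definition grade :: "nat \<Rightarrow> real \<Rightarrow> (nat \<Rightarrow> real) \<Rightarrow> nat \<Rightarrow> real" where
  "grade n m x i = x i + max (m - xbar n x) 0"

definition payoff :: "nat \<Rightarrow> (nat \<Rightarrow> real) \<Rightarrow> real \<Rightarrow> (nat \<Rightarrow> real) \<Rightarrow> nat \<Rightarrow> real" where
  "payoff n alpha m x i = grade n m x i powr alpha i * (1 - x i) powr (1 - alpha i)"

definition pure_nash :: "nat \<Rightarrow> (nat \<Rightarrow> real) \<Rightarrow> real \<Rightarrow> (nat \<Rightarrow> real) \<Rightarrow> bool" where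
  "pure_nash n alpha m x \<longleftrightarrow>
     (\<forall>i<n. x i \<in> {0..1} \<and>
        (\<forall>y\<in>{0..1}. payoff n alpha m (x(i := y)) i \<le> payoff n alpha m x i))"

definition alpha_hat :: "nat \<Rightarrow> (nat \<Rightarrow> real) \<Rightarrow> real" where
  "alpha_hat n alpha = real n * (1 - 1 / (\<Sum>i<n. 1 / (real n - alpha i)))"

end

theory Submission
  imports Defs
begin

text \<open>While the curve is active, the grade of student \<open>i\<close> is, near her equilibrium effort,
  the affine function \<open>x\<^sub>i + (m - xbar) + (n - 1)/n \<cdot> (y - x\<^sub>i)\<close> of her own effort \<open>y\<close>.
  The first-order condition of the Cobb-Douglas payoff then gives
  \<open>x\<^sub>i = ((n - 1) \<alpha>\<^sub>i - n (1 - \<alpha>\<^sub>i) (m - xbar)) / (n - \<alpha>\<^sub>i)\<close>, a linear-fractional function of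
  \<open>\<alpha>\<^sub>i\<close> with pole at \<open>n\<close>. Every function \<open>u + v / (n - a)\<close> averages over the students to
  its value at \<open>\<alpha>_hat\<close>, because \<open>1 / (n - \<alpha>_hat)\<close> is the mean of the \<open>1 / (n - \<alpha>\<^sub>i)\<close>; so
  \<open>xbar\<close> satisfies the same equation with \<open>\<alpha>_hat\<close> in place of \<open>\<alpha>\<^sub>i\<close>, which is linear in
  \<open>xbar\<close>. Monotonicity of \<open>a \<mapsto> 1 / (n - a)\<close> puts \<open>\<alpha>_hat\<close> between the extreme abilities.\<close>

lemma sum_fun_upd_lessThan:
  fixes x :: "nat \<Rightarrow> 'a::ab_group_add"
  assumes "i < n"
  shows "(\<Sum>j<n. (x(i := y)) j) = (\<Sum>j<n. x j) + (y - x i)"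
proof -
  have "(\<Sum>j<n. (x(i := y)) j) = (\<Sum>j<n. x j + (if j = i then y - x i else 0))"
    by (rule sum.cong) auto
  then show ?thesis
    using assms by (simp add: sum.distrib)
qed

lemma xbar_fun_upd:
  assumes "i < n"
  shows "xbar n (x(i := y)) = xbar n x + (y - x i) / real n"
  unfolding xbar_def sum_fun_upd_lessThan[OF assms] by (simp add: add_divide_distrib)

lemma grade_fun_upd_curved:
  assumes "i < n" and "y - x i < real n * (m - xbar n x)"
  shows "grade n m (x(i := y)) i = x i + (m - xbar n x) + (real n - 1) / real n * (y - x i)"
proof -
  have n: "real n > 0"
    using assms(1) by simp
  have "(y - x i) / real n < m - xbar n x"
    using assms(2) n by (simp add: divide_less_eq mult.commute)
  then have "grade n m (x(i := y)) i = y + (m - xbar n x) - (y - x i) / real n"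
    unfolding grade_def xbar_fun_upd[OF assms(1)] by simp
  then show ?thesis
    using n by (simp add: field_simps)
qed

lemma cobb_douglas_affine_local_max:
  fixes a g k y \<delta> :: real
  assumes "0 < g" and "y < 1" and "0 < \<delta>"
    and max: "\<And>z. \<bar>y - z\<bar> < \<delta> \<Longrightarrow>
      (g + k * (z - y)) powr a * (1 - z) powr (1 - a) \<le> g powr a * (1 - y) powr (1 - a)"
  shows "a * k * (1 - y) = (1 - a) * g"
proof -
  define W where "W = 1 - y"
  have "W > 0"
    using \<open>y < 1\<close> by (simp add: W_def)
  have "DERIV (\<lambda>z. (g + k * (z - y)) powr a * (1 - z) powr (1 - a)) y :>
      a * g powr (a - 1) * k * W powr (1 - a) - (1 - a) * W powr (- a) * g powr a"
    using DERIV_mult[OF DERIV_fun_powr[of "\<lambda>z. g + k * (z - y)" k y a]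
        DERIV_fun_powr[of "\<lambda>z. 1 - z" "-1" y "1 - a"]] \<open>0 < g\<close> \<open>y < 1\<close>
    unfolding W_def by (auto intro!: derivative_eq_intros)
  then have "a * g powr (a - 1) * k * W powr (1 - a) - (1 - a) * W powr (- a) * g powr a = 0"
    using \<open>0 < \<delta>\<close> max by (intro DERIV_local_max) auto
  moreover have "W powr (1 - a) = W powr (- a) * W" and "g powr a = g powr (a - 1) * g"
    using \<open>W > 0\<close> \<open>0 < g\<close> powr_add[of W "- a" 1] powr_add[of g "a - 1" 1] by simp_all
  ultimately have "g powr (a - 1) * W powr (- a) * (a * k * W - (1 - a) * g) = 0"
    by (simp add: algebra_simps)
  then show ?thesis
    using \<open>W > 0\<close> \<open>0 < g\<close> by (simp add: W_def)
qed

lemma pure_nash_curved_effort_lt_one: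
  assumes nash: "pure_nash n alpha m x" and "i < n" and curve: "xbar n x < m"
  shows "x i < 1"
proof (rule ccontr)
  assume "\<not> x i < 1"
  then have "x i = 1"
    using nash \<open>i < n\<close> unfolding pure_nash_def by force
  then have "payoff n alpha m x i = 0"
    unfolding payoff_def by simp
  moreover have "grade n m (x(i := 0)) i > 0"
  proof -
    have "xbar n (x(i := 0)) \<le> xbar n x"
      using \<open>x i = 1\<close> by (simp add: xbar_fun_upd[OF \<open>i < n\<close>])
    then show ?thesis
      using curve by (simp add: grade_def less_max_iff_disj)
  qed
  then have "payoff n alpha m (x(i := 0)) i > 0"
    unfolding payoff_def by simp
  moreover have "payoff n alpha m (x(i := 0)) i \<le> payoff n alpha m x i"
    using nash \<open>i < n\<close> unfolding pure_nash_def by simp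
  ultimately show False
    by simp
qed

lemma pure_nash_curved_first_order:
  assumes nash: "pure_nash n alpha m x" and "i < n" and curve: "xbar n x < m" and "0 < x i"
  shows "x i * (real n - alpha i) = (real n - 1) * alpha i - real n * (1 - alpha i) * (m - xbar n x)"
proof -
  define d k where "d = m - xbar n x" and "k = (real n - 1) / real n"
  have "d > 0" "real n > 0"
    using curve \<open>i < n\<close> by (simp_all add: d_def)
  have "x i < 1"
    using pure_nash_curved_effort_lt_one[OF nash \<open>i < n\<close> curve] .
  have payoff_near: "payoff n alpha m (x(i := z)) i
      = (x i + d + k * (z - x i)) powr alpha i * (1 - z) powr (1 - alpha i)"
    if "z - x i < real n * d" for z
    using grade_fun_upd_curved[OF \<open>i < n\<close>, of z x m] that
    unfolding payoff_def d_def k_def by simp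
  define \<delta> where "\<delta> = min (x i) (min (1 - x i) (real n * d))"
  have "\<delta> > 0"
    using \<open>0 < x i\<close> \<open>x i < 1\<close> \<open>d > 0\<close> \<open>real n > 0\<close> by (simp add: \<delta>_def)
  have "alpha i * k * (1 - x i) = (1 - alpha i) * (x i + d)"
  proof (rule cobb_douglas_affine_local_max[OF _ \<open>x i < 1\<close> \<open>\<delta> > 0\<close>])
    show "0 < x i + d"
      using \<open>0 < x i\<close> \<open>d > 0\<close> by simp
    fix z
    assume "\<bar>x i - z\<bar> < \<delta>"
    then have "z \<in> {0..1}" "z - x i < real n * d"
      by (auto simp: \<delta>_def)
    then show "(x i + d + k * (z - x i)) powr alpha i * (1 - z) powr (1 - alpha i)
        \<le> (x i + d) powr alpha i * (1 - x i) powr (1 - alpha i)"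
      using nash \<open>i < n\<close> payoff_near[of z] payoff_near[of "x i"] \<open>d > 0\<close> \<open>real n > 0\<close>
      unfolding pure_nash_def by force
  qed
  then have "alpha i * (real n - 1) * (1 - x i) = real n * (1 - alpha i) * (x i + d)"
    using \<open>real n > 0\<close> by (simp add: k_def field_simps)
  then show ?thesis
    by (simp add: d_def algebra_simps)
qed

lemma pure_nash_curved_effort:
  assumes "pure_nash n alpha m x" and "i < n" and "xbar n x < m" and "0 < x i"
    and "alpha i < real n"
  shows "x i = ((real n - 1) * alpha i - real n * (1 - alpha i) * (m - xbar n x)) / (real n - alpha i)"
  using pure_nash_curved_first_order[OF assms(1-4)] assms(5) by (simp add: eq_divide_eq)

lemma diff_alpha_hat: "real n - alpha_hat n alpha = real n / (\<Sum>i<n. 1 / (real n - alpha i))"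
  unfolding alpha_hat_def by (simp add: algebra_simps)

lemma sum_inverse_diff_pos:
  assumes "n > 0" and "\<forall>i<n. alpha i < real n"
  shows "0 < (\<Sum>i<n. 1 / (real n - alpha i))"
  using assms by (intro sum_pos) auto

lemma mean_linear_fractional_alpha_hat:
  assumes "n > 0" and below: "\<forall>i<n. alpha i < real n"
  shows "(\<Sum>i<n. (p + q * alpha i) / (real n - alpha i)) / real n
    = (p + q * alpha_hat n alpha) / (real n - alpha_hat n alpha)"
proof -
  define h where "h = (\<Sum>i<n. 1 / (real n - alpha i))"
  have "h > 0"
    using sum_inverse_diff_pos[OF assms] by (simp add: h_def)
  have "(\<Sum>i<n. (p + q * alpha i) / (real n - alpha i))
      = (\<Sum>i<n. (p + q * real n) / (real n - alpha i) - q)"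
    using below by (intro sum.cong) (auto simp: field_simps)
  also have "\<dots> = (p + q * real n) * h - q * real n"
    by (simp add: h_def sum_subtractf sum_distrib_left)
  finally have sum_eq:
    "(\<Sum>i<n. (p + q * alpha i) / (real n - alpha i)) = (p + q * real n) * h - q * real n" .
  have alpha_hat_eq: "alpha_hat n alpha = real n - real n / h"
    using diff_alpha_hat[of n alpha] unfolding h_def[symmetric] by simp
  show ?thesis
    unfolding sum_eq alpha_hat_eq using \<open>n > 0\<close> \<open>h > 0\<close> by (simp add: field_simps)
qed

lemma alpha_hat_between:
  assumes "n > 0" and bounds: "\<forall>i<n. L \<le> alpha i \<and> alpha i \<le> M" and "M < real n"
  shows "L \<le> alpha_hat n alpha \<and> alpha_hat n alpha \<le> M"
proof -
  define h where "h = (\<Sum>i<n. 1 / (real n - alpha i))"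
  have "L < real n"
    using bounds \<open>n > 0\<close> \<open>M < real n\<close> by force
  have "h > 0"
    using sum_inverse_diff_pos[of n alpha] assms by (force simp: h_def)
  have "real n / (real n - L) \<le> h"
  proof -
    have "(\<Sum>i<n. 1 / (real n - L)) \<le> h"
      unfolding h_def using bounds \<open>M < real n\<close>
      by (intro sum_mono divide_left_mono) auto
    then show ?thesis by simp
  qed
  moreover have "h \<le> real n / (real n - M)"
  proof -
    have "h \<le> (\<Sum>i<n. 1 / (real n - M))"
      unfolding h_def using bounds \<open>M < real n\<close>
      by (intro sum_mono divide_left_mono) auto
    then show ?thesis by simp
  qed
  ultimately have "real n - M \<le> real n / h" "real n / h \<le> real n - L"
    using \<open>h > 0\<close> \<open>L < real n\<close> \<open>M < real n\<close> by (simp_all add: field_simps)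
  then show ?thesis
    using diff_alpha_hat[of n alpha] unfolding h_def[symmetric] by simp
qed

lemma pure_nash_curved_xbar:
  assumes nash: "pure_nash n alpha m x" and curve: "xbar n x < m" and "\<forall>i<n. 0 < x i"
    and "n > 0" and below: "\<forall>i<n. alpha i < real n"
  shows "xbar n x * (real n - alpha_hat n alpha)
    = (real n - 1) * alpha_hat n alpha - real n * (1 - alpha_hat n alpha) * (m - xbar n x)"
proof -
  define d where "d = m - xbar n x"
  have effort: "x i = (- real n * d + (real n - 1 + real n * d) * alpha i) / (real n - alpha i)"
    if "i < n" for i
  proof -
    have "(real n - 1) * alpha i - real n * (1 - alpha i) * d
        = - real n * d + (real n - 1 + real n * d) * alpha i"
      by (simp add: algebra_simps)
    then show ?thesis
      using pure_nash_curved_effort[OF nash that curve] assms(3) below that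
      unfolding d_def[symmetric] by simp
  qed
  have "real n - alpha_hat n alpha > 0"
    using diff_alpha_hat[of n alpha] sum_inverse_diff_pos[OF \<open>n > 0\<close> below] \<open>n > 0\<close> by simp
  have "xbar n x
      = (\<Sum>i<n. (- real n * d + (real n - 1 + real n * d) * alpha i) / (real n - alpha i)) / real n"
    unfolding xbar_def using effort by simp
  also have "\<dots>
      = (- real n * d + (real n - 1 + real n * d) * alpha_hat n alpha) / (real n - alpha_hat n alpha)"
    by (rule mean_linear_fractional_alpha_hat[OF \<open>n > 0\<close> below])
  finally have "xbar n x * (real n - alpha_hat n alpha)
      = - real n * d + (real n - 1 + real n * d) * alpha_hat n alpha"
    using \<open>real n - alpha_hat n alpha > 0\<close> by (simp add: eq_divide_eq)
  then show ?thesis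
    unfolding d_def by (simp add: algebra_simps)
qed

theorem mainTheorem8:
  fixes n :: nat and alpha x :: "nat \<Rightarrow> real" and m :: real
  assumes "n \<ge> 2"
    and "\<forall>i<n. 0 < alpha i \<and> alpha i < 1"
    and "0 < m" and "m < 1"
    and "pure_nash n alpha m x"
    and "xbar n x < m"
    and "\<forall>i<n. x i > 0"
  shows "Min (alpha ` {..<n}) \<le> alpha_hat n alpha
       \<and> alpha_hat n alpha \<le> Max (alpha ` {..<n})
       \<and> xbar n x = 1 - real n * m / (real n - 1) * (1 / alpha_hat n alpha - 1)
       \<and> (\<forall>i<n. x i = ((real n - 1) * alpha i - real n * (1 - alpha i) * (m - xbar n x))
                        / (real n - alpha i))"
proof -
  define A where "A = alpha_hat n alpha"
  have "n > 0" "real n > 1"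
    using assms(1) by simp_all
  have below: "\<forall>i<n. alpha i < real n"
    using assms(2) \<open>real n > 1\<close> by force
  have fin: "finite (alpha ` {..<n})" and nonempty: "alpha ` {..<n} \<noteq> {}"
    using \<open>n > 0\<close> by auto
  have "Max (alpha ` {..<n}) < real n" "0 < Min (alpha ` {..<n})"
    using Max_in[OF fin nonempty] Min_in[OF fin nonempty] below assms(2) by auto
  moreover have between: "Min (alpha ` {..<n}) \<le> A \<and> A \<le> Max (alpha ` {..<n})"
    unfolding A_def using \<open>n > 0\<close> fin \<open>Max (alpha ` {..<n}) < real n\<close>
    by (intro alpha_hat_between) auto
  ultimately have "0 < A"
    by linarith
  have "xbar n x * (real n - 1) * A = (real n - 1) * A - real n * (1 - A) * m"
    using pure_nash_curved_xbar[OF assms(5,6,7) \<open>n > 0\<close> below] unfolding A_def[symmetric]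
    by (simp add: algebra_simps)
  then have "xbar n x = 1 - real n * m / (real n - 1) * (1 / A - 1)"
    using \<open>0 < A\<close> \<open>real n > 1\<close> by (simp add: field_simps)
  then show ?thesis
    using between pure_nash_curved_effort[OF assms(5) _ assms(6)] assms(7) below
    unfolding A_def by blast
qed

end
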